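(* Let $X:I\times J\to\mathbb{R}^4$ be a pencil surface $X(s,t)=\gamma(s)+A(t)V_2(s)+B(t)V_4(s)$ (notation and standing assumptions as in the context). Then the Gaussian curvature of $X$ at $(s,t)$ is $$K=\frac{(a^2+b^2)\,\bigl(A'B''-B'A''\bigr)\,\bigl\{A'\,b\,\kappa_3-B'(\kappa_1 a-\kappa_2 b)\bigr\}-\bigl((A')^2+(B')^2\bigr)\bigl(a\,b_t-b\,a_t\bigr)^2}{E^2G^2},$$ where $E=a^2+b^2$, $G=(A')^2+(B')^2$, and all functions are evaluated at $s$, $t$ or $(s,t)$ as appropriate.
   Context: Let $I,J\subset\mathbb{R}$ be open intervals and $\gamma:I\to\mathbb{R}^4$ a smooth unit-speed curve equipped with a smooth orthonormal frame $(V_1,V_2,V_3,V_4)$ along $\gamma$ and smooth functions $\kappa_1,\kappa_2,\kappa_3:I\to\mathbb{R}$ satisfying the Frenet equations $\gamma'=V_1$, $V_1'=\kappa_1V_2$, $V_2'=-\kappa_1V_1+\kappa_2V_3$, $V_3'=-\kappa_2V_2+\kappa_3V_4$, $V_4'=-\kappa_3V_3$. Let $A,B:J\to\mathbb{R}$ be smooth ("marching-scale functions") and define the pencil surface $X(s,t)=\gamma(s)+A(t)V_2(s)+B(t)V_4(s)$. Put $a(s,t)=1-\kappa_1(s)A(t)$ and $b(s,t)=\kappa_2(s)A(t)-\kappa_3(s)B(t)$, and assume $a^2+b^2>0$ on $I\times J$ and $A'(t)^2+B'(t)^2>0$ on $J$ (so $X$ is an immersion). Primes on $A,B$ denote $d/dt$;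 subscripts $s,t$ denote partial derivatives. $K$ is the Gaussian curvature of the induced metric. *)

theory Defs
  imports "HOL-Analysis.Analysis"
begin

definition iter_deriv :: "nat \<Rightarrow> (real \<Rightarrow> 'a::real_normed_vector) \<Rightarrow> real \<Rightarrow> 'a" where
  "iter_deriv n f = ((\<lambda>g x. vector_derivative g (at x)) ^^ n) f"

definition smooth_on :: "real set \<Rightarrow> (real \<Rightarrow> 'a::real_normed_vector) \<Rightarrow> bool" where
  "smooth_on S f \<longleftrightarrow> (\<forall>n. \<forall>x\<in>S. iter_deriv n f differentiable (at x))"

definition det3 :: "real \<Rightarrow> real \<Rightarrow> real \<Rightarrow> real \<Rightarrow> real \<Rightarrow> real \<Rightarrow> real \<Rightarrow> real \<Rightarrow> real \<Rightarrow> real" where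
  "det3 a11 a12 a13 a21 a22 a23 a31 a32 a33 =
     a11 * (a22 * a33 - a23 * a32) - a12 * (a21 * a33 - a23 * a31) + a13 * (a21 * a32 - a22 * a31)"

definition fff_E :: "(real \<Rightarrow> real \<Rightarrow> 'a::real_inner) \<Rightarrow> real \<Rightarrow> real \<Rightarrow> real" where
  "fff_E X u v = vector_derivative (\<lambda>u. X u v) (at u) \<bullet> vector_derivative (\<lambda>u. X u v) (at u)"
definition fff_F :: "(real \<Rightarrow> real \<Rightarrow> 'a::real_inner) \<Rightarrow> real \<Rightarrow> real \<Rightarrow> real" where
  "fff_F X u v = vector_derivative (\<lambda>u. X u v) (at u) \<bullet> vector_derivative (\<lambda>v. X u v) (at v)"
definition fff_G :: "(real \<Rightarrow> real \<Rightarrow> 'a::real_inner) \<Rightarrow> real \<Rightarrow> real \<Rightarrow> real" where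
  "fff_G X u v = vector_derivative (\<lambda>v. X u v) (at v) \<bullet> vector_derivative (\<lambda>v. X u v) (at v)"

text \<open>Gaussian curvature of the induced metric E du^2 + 2F du dv + G dv^2,
  given by the Brioschi formula (intrinsic curvature of the metric in coordinates).\<close>
definition gauss_curvature :: "(real \<Rightarrow> real \<Rightarrow> 'a::real_inner) \<Rightarrow> real \<Rightarrow> real \<Rightarrow> real" where
  "gauss_curvature X u v =
    (let E = fff_E X; F = fff_F X; G = fff_G X;
         Eu = deriv (\<lambda>u. E u v) u; Ev = deriv (\<lambda>v. E u v) v;
         Fu = deriv (\<lambda>u. F u v) u; Fv = deriv (\<lambda>v. F u v) v;
         Gu = deriv (\<lambda>u. G u v) u; Gv = deriv (\<lambda>v. G u v) v;
         Evv = deriv (\<lambda>v. deriv (\<lambda>v. E u v) v) v;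
         Fuv = deriv (\<lambda>v. deriv (\<lambda>u. F u v) u) v;
         Guu = deriv (\<lambda>u. deriv (\<lambda>u. G u v) u) u
     in (det3 (- Evv / 2 + Fuv - Guu / 2) (Eu / 2) (Fu - Ev / 2)
              (Fv - Gu / 2) (E u v) (F u v)
              (Gv / 2) (F u v) (G u v)
       - det3 0 (Ev / 2) (Gu / 2)
              (Ev / 2) (E u v) (F u v)
              (Gu / 2) (F u v) (G u v))
       / (E u v * G u v - (F u v)^2)^2)"

definition pencil_surface ::
  "(real \<Rightarrow> real^4) \<Rightarrow> (real \<Rightarrow> real^4) \<Rightarrow> (real \<Rightarrow> real^4) \<Rightarrow> (real \<Rightarrow> real) \<Rightarrow> (real \<Rightarrow> real)
   \<Rightarrow> real \<Rightarrow> real \<Rightarrow> real^4" where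
  "pencil_surface \<gamma> V2 V4 A B s t = \<gamma> s + A t *\<^sub>R V2 s + B t *\<^sub>R V4 s"

end

theory Submission
  imports Defs
begin

text \<open>The coordinate tangent vectors are \<open>X\<^sub>s = a V\<^sub>1 + b V\<^sub>3\<close> and
  \<open>X\<^sub>t = A' V\<^sub>2 + B' V\<^sub>4\<close>, which are orthogonal; so \<open>F = 0\<close>, \<open>E = a\<^sup>2 + b\<^sup>2\<close> and
  \<open>G = A'\<^sup>2 + B'\<^sup>2\<close>, the latter independent of \<open>s\<close>. For such a metric the Brioschi formula
  collapses to \<open>K = (E (E\<^sub>t G\<^sub>t/4 - E\<^sub>t\<^sub>t G/2) + E\<^sub>t\<^sup>2 G/4) / (E\<^sup>2 G\<^sup>2)\<close>, and the Lagrange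
  identity \<open>(a a\<^sub>t + b b\<^sub>t)\<^sup>2 - (a\<^sup>2 + b\<^sup>2)(a\<^sub>t\<^sup>2 + b\<^sub>t\<^sup>2) = -(a b\<^sub>t - b a\<^sub>t)\<^sup>2\<close> turns the
  numerator into the stated one.\<close>

lemma vector_derivative_real_eq_deriv:
  "vector_derivative (f :: real \<Rightarrow> real) (at x) = deriv f x"
  unfolding vector_derivative_def deriv_def has_vector_derivative_def has_field_derivative_def
  by (simp add: mult.commute)

lemma smooth_on_has_real_derivative:
  assumes "smooth_on S (f :: real \<Rightarrow> real)" "x \<in> S"
  shows "(f has_real_derivative deriv f x) (at x)"
proof -
  have "iter_deriv 0 f differentiable (at x)"
    using assms unfolding smooth_on_def by blast
  then show ?thesis
    by (simp add: iter_deriv_def DERIV_deriv_iff_real_differentiable)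
qed

lemma smooth_on_deriv_has_real_derivative:
  assumes "smooth_on S (f :: real \<Rightarrow> real)" "x \<in> S"
  shows "(deriv f has_real_derivative deriv (deriv f) x) (at x)"
proof -
  have "iter_deriv 1 f differentiable (at x)"
    using assms unfolding smooth_on_def by blast
  moreover have "iter_deriv 1 f = deriv f"
    by (simp add: iter_deriv_def vector_derivative_real_eq_deriv[abs_def])
  ultimately show ?thesis
    by (simp add: DERIV_deriv_iff_real_differentiable)
qed

lemma deriv_eq_on_open:
  assumes "open S" "x \<in> S" "\<And>y. y \<in> S \<Longrightarrow> f y = g y" "(g has_real_derivative D) (at x)"
  shows "deriv f x = D"
  by (metis DERIV_imp_deriv has_field_derivative_transform_within_open assms)

lemma deriv_eq_zero_on_open:
  fixes f :: "real \<Rightarrow> real"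
  assumes "open S" "x \<in> S" "\<And>y. y \<in> S \<Longrightarrow> f y = c"
  shows "deriv f x = 0"
  using assms by (intro deriv_eq_on_open[where g = "\<lambda>_. c"]) auto

lemma gauss_curvature_orthogonal:
  fixes X :: "real \<Rightarrow> real \<Rightarrow> 'a::real_inner"
  assumes "open U" "open V" "u \<in> U" "v \<in> V"
    and F_zero: "\<And>x y. x \<in> U \<Longrightarrow> y \<in> V \<Longrightarrow> fff_F X x y = 0"
    and G_const: "\<And>x. x \<in> U \<Longrightarrow> fff_G X x v = fff_G X u v"
  shows "gauss_curvature X u v =
    (fff_E X u v * (deriv (\<lambda>v. fff_E X u v) v / 2 * (deriv (\<lambda>v. fff_G X u v) v / 2)
                    - deriv (\<lambda>v. deriv (\<lambda>v. fff_E X u v) v) v / 2 * fff_G X u v)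
     + (deriv (\<lambda>v. fff_E X u v) v / 2)\<^sup>2 * fff_G X u v)
    / ((fff_E X u v)\<^sup>2 * (fff_G X u v)\<^sup>2)"
proof -
  have Gu: "deriv (\<lambda>x. fff_G X x v) x = 0" if "x \<in> U" for x
    by (rule deriv_eq_zero_on_open[OF assms(1) that G_const])
  have Guu: "deriv (\<lambda>x. deriv (\<lambda>x. fff_G X x v) x) u = 0"
    by (rule deriv_eq_zero_on_open[OF assms(1,3) Gu])
  have Fu: "deriv (\<lambda>x. fff_F X x y) u = 0" if "y \<in> V" for y
    by (rule deriv_eq_zero_on_open[OF assms(1,3)]) (simp add: F_zero that)
  have Fv: "deriv (\<lambda>y. fff_F X u y) v = 0"
    by (rule deriv_eq_zero_on_open[OF assms(2,4)]) (simp add: F_zero assms(3))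
  have Fuv: "deriv (\<lambda>y. deriv (\<lambda>x. fff_F X x y) u) v = 0"
    by (rule deriv_eq_zero_on_open[OF assms(2,4) Fu])
  show ?thesis
    unfolding gauss_curvature_def Let_def det3_def
    using F_zero[OF assms(3,4)] Gu[OF assms(3)] Guu Fu[OF assms(4)] Fv Fuv
    by (simp add: field_simps power2_eq_square)
qed

lemma pencil_surface_has_vector_derivative_t:
  assumes "(A has_real_derivative A') (at t)" "(B has_real_derivative B') (at t)"
  shows "((\<lambda>t. pencil_surface \<gamma> V2 V4 A B s t) has_vector_derivative A' *\<^sub>R V2 s + B' *\<^sub>R V4 s) (at t)"
  unfolding pencil_surface_def using assms
  by (auto intro!: derivative_eq_intros)

locale frenet_frame4 =
  fixes I :: "real set"
    and \<gamma> V1 V2 V3 V4 :: "real \<Rightarrow> real^4"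
    and \<kappa>1 \<kappa>2 \<kappa>3 :: "real \<Rightarrow> real"
  assumes orthonormal: "\<And>x. x \<in> I \<Longrightarrow>
      V1 x \<bullet> V1 x = 1 \<and> V2 x \<bullet> V2 x = 1 \<and> V3 x \<bullet> V3 x = 1 \<and> V4 x \<bullet> V4 x = 1 \<and>
      V1 x \<bullet> V2 x = 0 \<and> V1 x \<bullet> V3 x = 0 \<and> V1 x \<bullet> V4 x = 0 \<and>
      V2 x \<bullet> V3 x = 0 \<and> V2 x \<bullet> V4 x = 0 \<and> V3 x \<bullet> V4 x = 0"
    and frenet: "\<And>x. x \<in> I \<Longrightarrow>
      (\<gamma> has_vector_derivative V1 x) (at x) \<and>
      (V1 has_vector_derivative \<kappa>1 x *\<^sub>R V2 x) (at x) \<and>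
      (V2 has_vector_derivative (- \<kappa>1 x *\<^sub>R V1 x + \<kappa>2 x *\<^sub>R V3 x)) (at x) \<and>
      (V3 has_vector_derivative (- \<kappa>2 x *\<^sub>R V2 x + \<kappa>3 x *\<^sub>R V4 x)) (at x) \<and>
      (V4 has_vector_derivative (- \<kappa>3 x *\<^sub>R V3 x)) (at x)"
begin

lemma pencil_surface_vector_derivative_s:
  assumes "s \<in> I"
  shows "vector_derivative (\<lambda>s. pencil_surface \<gamma> V2 V4 A B s t) (at s)
    = (1 - \<kappa>1 s * A t) *\<^sub>R V1 s + (\<kappa>2 s * A t - \<kappa>3 s * B t) *\<^sub>R V3 s"
proof (rule vector_derivative_at)
  have "V1 s + (A t *\<^sub>R (- \<kappa>1 s *\<^sub>R V1 s + \<kappa>2 s *\<^sub>R V3 s) + B t *\<^sub>R (- \<kappa>3 s *\<^sub>R V3 s))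
      = (1 - \<kappa>1 s * A t) *\<^sub>R V1 s + (\<kappa>2 s * A t - \<kappa>3 s * B t) *\<^sub>R V3 s"
    by (simp add: algebra_simps)
  moreover have "((\<lambda>s. pencil_surface \<gamma> V2 V4 A B s t) has_vector_derivative
      V1 s + (A t *\<^sub>R (- \<kappa>1 s *\<^sub>R V1 s + \<kappa>2 s *\<^sub>R V3 s) + B t *\<^sub>R (- \<kappa>3 s *\<^sub>R V3 s))) (at s)"
    unfolding pencil_surface_def using frenet[OF assms]
    by (auto intro!: derivative_eq_intros simp: add.assoc)
  ultimately show "((\<lambda>s. pencil_surface \<gamma> V2 V4 A B s t) has_vector_derivative
      (1 - \<kappa>1 s * A t) *\<^sub>R V1 s + (\<kappa>2 s * A t - \<kappa>3 s * B t) *\<^sub>R V3 s) (at s)"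
    by simp
qed

lemma fff_E_pencil_surface:
  assumes "s \<in> I"
  shows "fff_E (pencil_surface \<gamma> V2 V4 A B) s t = (1 - \<kappa>1 s * A t)\<^sup>2 + (\<kappa>2 s * A t - \<kappa>3 s * B t)\<^sup>2"
  unfolding fff_E_def pencil_surface_vector_derivative_s[OF assms] using orthonormal[OF assms]
  by (simp add: inner_add_left inner_add_right inner_commute power2_eq_square)

lemma fff_F_pencil_surface:
  assumes "s \<in> I" "(A has_real_derivative A') (at t)" "(B has_real_derivative B') (at t)"
  shows "fff_F (pencil_surface \<gamma> V2 V4 A B) s t = 0"
  unfolding fff_F_def pencil_surface_vector_derivative_s[OF assms(1)]
    vector_derivative_at[OF pencil_surface_has_vector_derivative_t[OF assms(2,3)]]
  using orthonormal[OF assms(1)]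
  by (simp add: inner_add_left inner_add_right inner_commute)

lemma fff_G_pencil_surface:
  assumes "s \<in> I" "(A has_real_derivative A') (at t)" "(B has_real_derivative B') (at t)"
  shows "fff_G (pencil_surface \<gamma> V2 V4 A B) s t = A'\<^sup>2 + B'\<^sup>2"
  unfolding fff_G_def vector_derivative_at[OF pencil_surface_has_vector_derivative_t[OF assms(2,3)]]
  using orthonormal[OF assms(1)]
  by (simp add: inner_add_left inner_add_right inner_commute power2_eq_square)

end

lemma pencil_curvature_numerator:
  fixes a b k1 k2 k3 A' B' A'' B'' :: real
  shows "(a\<^sup>2 + b\<^sup>2) * ((a * (- k1 * A') + b * (k2 * A' - k3 * B')) * (A' * A'' + B' * B'')
            - ((- k1 * A')\<^sup>2 + (k2 * A' - k3 * B')\<^sup>2 + a * (- k1 * A'') + b * (k2 * A'' - k3 * B''))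
              * (A'\<^sup>2 + B'\<^sup>2))
         + (a * (- k1 * A') + b * (k2 * A' - k3 * B'))\<^sup>2 * (A'\<^sup>2 + B'\<^sup>2)
       = (a\<^sup>2 + b\<^sup>2) * (A' * B'' - B' * A'') * (A' * b * k3 - B' * (k1 * a - k2 * b))
         - (A'\<^sup>2 + B'\<^sup>2) * (a * (k2 * A' - k3 * B') - b * (- k1 * A'))\<^sup>2"
  by algebra

locale pencil_surface_data = frenet_frame4 +
  fixes J :: "real set"
    and A B :: "real \<Rightarrow> real"
  assumes open_I: "open I" and open_J: "open J"
    and A_deriv: "\<And>y. y \<in> J \<Longrightarrow> (A has_real_derivative deriv A y) (at y)"
      "\<And>y. y \<in> J \<Longrightarrow> (deriv A has_real_derivative deriv (deriv A) y) (at y)"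
    and B_deriv: "\<And>y. y \<in> J \<Longrightarrow> (B has_real_derivative deriv B y) (at y)"
      "\<And>y. y \<in> J \<Longrightarrow> (deriv B has_real_derivative deriv (deriv B) y) (at y)"
begin

abbreviation X :: "real \<Rightarrow> real \<Rightarrow> real^4" where
  "X \<equiv> pencil_surface \<gamma> V2 V4 A B"

lemma deriv_fff_E_pencil_surface:
  assumes "s \<in> I" "y \<in> J"
  shows "deriv (\<lambda>t. fff_E X s t) y = 2 * ((1 - \<kappa>1 s * A y) * (- \<kappa>1 s * deriv A y)
    + (\<kappa>2 s * A y - \<kappa>3 s * B y) * (\<kappa>2 s * deriv A y - \<kappa>3 s * deriv B y))"
  by (rule deriv_eq_on_open[OF open_J assms(2),
        where g = "\<lambda>t. (1 - \<kappa>1 s * A t)\<^sup>2 + (\<kappa>2 s * A t - \<kappa>3 s * B t)\<^sup>2"])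
    (auto simp: fff_E_pencil_surface[OF assms(1)] intro!: derivative_eq_intros A_deriv B_deriv assms(2))

lemma deriv2_fff_E_pencil_surface:
  assumes "s \<in> I" "t \<in> J"
  shows "deriv (deriv (\<lambda>t. fff_E X s t)) t = 2 * ((- \<kappa>1 s * deriv A t)\<^sup>2
    + (\<kappa>2 s * deriv A t - \<kappa>3 s * deriv B t)\<^sup>2 + (1 - \<kappa>1 s * A t) * (- \<kappa>1 s * deriv (deriv A) t)
    + (\<kappa>2 s * A t - \<kappa>3 s * B t) * (\<kappa>2 s * deriv (deriv A) t - \<kappa>3 s * deriv (deriv B) t))"
  by (rule deriv_eq_on_open[OF open_J assms(2)], erule deriv_fff_E_pencil_surface[OF assms(1)],
      auto intro!: derivative_eq_intros A_deriv B_deriv assms(2))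
    (simp add: algebra_simps power2_eq_square)

lemma deriv_fff_G_pencil_surface:
  assumes "s \<in> I" "t \<in> J"
  shows "deriv (\<lambda>t. fff_G X s t) t = 2 * (deriv A t * deriv (deriv A) t + deriv B t * deriv (deriv B) t)"
  by (rule deriv_eq_on_open[OF open_J assms(2), where g = "\<lambda>t. (deriv A t)\<^sup>2 + (deriv B t)\<^sup>2"])
    (auto simp: fff_G_pencil_surface[OF assms(1) A_deriv(1) B_deriv(1)]
      intro!: derivative_eq_intros A_deriv B_deriv assms(2))

lemma gauss_curvature_pencil_surface:
  assumes "s \<in> I" "t \<in> J"
  shows "gauss_curvature X s t =
    (((1 - \<kappa>1 s * A t)\<^sup>2 + (\<kappa>2 s * A t - \<kappa>3 s * B t)\<^sup>2)
        * (deriv A t * deriv (deriv B) t - deriv B t * deriv (deriv A) t)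
        * (deriv A t * (\<kappa>2 s * A t - \<kappa>3 s * B t) * \<kappa>3 s
           - deriv B t * (\<kappa>1 s * (1 - \<kappa>1 s * A t) - \<kappa>2 s * (\<kappa>2 s * A t - \<kappa>3 s * B t)))
      - ((deriv A t)\<^sup>2 + (deriv B t)\<^sup>2) * ((1 - \<kappa>1 s * A t) * (\<kappa>2 s * deriv A t - \<kappa>3 s * deriv B t)
           - (\<kappa>2 s * A t - \<kappa>3 s * B t) * (- \<kappa>1 s * deriv A t))\<^sup>2)
    / (((1 - \<kappa>1 s * A t)\<^sup>2 + (\<kappa>2 s * A t - \<kappa>3 s * B t)\<^sup>2)\<^sup>2 * ((deriv A t)\<^sup>2 + (deriv B t)\<^sup>2)\<^sup>2)"
proof -
  have F_zero: "fff_F X x y = 0" if "x \<in> I" "y \<in> J" for x y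
    using fff_F_pencil_surface[OF that(1) A_deriv(1)[OF that(2)] B_deriv(1)[OF that(2)]] .
  have G: "fff_G X x y = (deriv A y)\<^sup>2 + (deriv B y)\<^sup>2" if "x \<in> I" "y \<in> J" for x y
    using fff_G_pencil_surface[OF that(1) A_deriv(1)[OF that(2)] B_deriv(1)[OF that(2)]] .
  have G_const: "fff_G X x t = fff_G X s t" if "x \<in> I" for x
    using G that assms by simp
  have K: "gauss_curvature X s t =
    (fff_E X s t * (deriv (\<lambda>y. fff_E X s y) t / 2 * (deriv (\<lambda>y. fff_G X s y) t / 2)
                    - deriv (deriv (\<lambda>y. fff_E X s y)) t / 2 * fff_G X s t)
     + (deriv (\<lambda>y. fff_E X s y) t / 2)\<^sup>2 * fff_G X s t)
    / ((fff_E X s t)\<^sup>2 * (fff_G X s t)\<^sup>2)"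
    using F_zero G_const by (rule gauss_curvature_orthogonal[OF open_I open_J assms])
  have half: "2 * x / 2 = x" for x :: real
    by simp
  show ?thesis
    unfolding K G[OF assms] fff_E_pencil_surface[OF assms(1)] deriv_fff_E_pencil_surface[OF assms]
      deriv2_fff_E_pencil_surface[OF assms] deriv_fff_G_pencil_surface[OF assms] half
    unfolding pencil_curvature_numerator ..
qed

end

theorem proposition1:
  fixes I J :: "real set"
    and \<gamma> V1 V2 V3 V4 :: "real \<Rightarrow> real^4"
    and \<kappa>1 \<kappa>2 \<kappa>3 A B :: "real \<Rightarrow> real"
    and s t :: real
  assumes I: "open I" "is_interval I" "I \<noteq> {}"
    and J: "open J" "is_interval J" "J \<noteq> {}"
    and smooth: "smooth_on I \<gamma>" "smooth_on I V1" "smooth_on I V2" "smooth_on I V3" "smooth_on I V4"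
      "smooth_on I \<kappa>1" "smooth_on I \<kappa>2" "smooth_on I \<kappa>3" "smooth_on J A" "smooth_on J B"
    and orth: "\<And>x. x \<in> I \<Longrightarrow>
      V1 x \<bullet> V1 x = 1 \<and> V2 x \<bullet> V2 x = 1 \<and> V3 x \<bullet> V3 x = 1 \<and> V4 x \<bullet> V4 x = 1 \<and>
      V1 x \<bullet> V2 x = 0 \<and> V1 x \<bullet> V3 x = 0 \<and> V1 x \<bullet> V4 x = 0 \<and>
      V2 x \<bullet> V3 x = 0 \<and> V2 x \<bullet> V4 x = 0 \<and> V3 x \<bullet> V4 x = 0"
    and frenet: "\<And>x. x \<in> I \<Longrightarrow>
      (\<gamma> has_vector_derivative V1 x) (at x) \<and>
      (V1 has_vector_derivative \<kappa>1 x *\<^sub>R V2 x) (at x) \<and>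
      (V2 has_vector_derivative (- \<kappa>1 x *\<^sub>R V1 x + \<kappa>2 x *\<^sub>R V3 x)) (at x) \<and>
      (V3 has_vector_derivative (- \<kappa>2 x *\<^sub>R V2 x + \<kappa>3 x *\<^sub>R V4 x)) (at x) \<and>
      (V4 has_vector_derivative (- \<kappa>3 x *\<^sub>R V3 x)) (at x)"
    and reg1: "\<And>x y. x \<in> I \<Longrightarrow> y \<in> J \<Longrightarrow>
      (1 - \<kappa>1 x * A y)^2 + (\<kappa>2 x * A y - \<kappa>3 x * B y)^2 > 0"
    and reg2: "\<And>y. y \<in> J \<Longrightarrow> (deriv A y)^2 + (deriv B y)^2 > 0"
    and st: "s \<in> I" "t \<in> J"
  shows
    "let a = (\<lambda>s t. 1 - \<kappa>1 s * A t);
         b = (\<lambda>s t. \<kappa>2 s * A t - \<kappa>3 s * B t);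
         a_t = deriv (\<lambda>t. a s t) t;
         b_t = deriv (\<lambda>t. b s t) t;
         A' = deriv A t; B' = deriv B t;
         A'' = deriv (deriv A) t; B'' = deriv (deriv B) t;
         E = (a s t)^2 + (b s t)^2;
         G = A'^2 + B'^2
     in gauss_curvature (pencil_surface \<gamma> V2 V4 A B) s t =
        (E * (A' * B'' - B' * A'') * (A' * b s t * \<kappa>3 s - B' * (\<kappa>1 s * a s t - \<kappa>2 s * b s t))
          - G * (a s t * b_t - b s t * a_t)^2) / (E^2 * G^2)"
proof -
  interpret pencil_surface_data I \<gamma> V1 V2 V3 V4 \<kappa>1 \<kappa>2 \<kappa>3 J A B
    using orth frenet I(1) J(1) smooth(9,10)
    by unfold_locales (auto intro: smooth_on_has_real_derivative smooth_on_deriv_has_real_derivative)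
  have a_t: "deriv (\<lambda>t. 1 - \<kappa>1 s * A t) t = - \<kappa>1 s * deriv A t"
    by (rule DERIV_imp_deriv) (auto intro!: derivative_eq_intros A_deriv st(2))
  have b_t: "deriv (\<lambda>t. \<kappa>2 s * A t - \<kappa>3 s * B t) t = \<kappa>2 s * deriv A t - \<kappa>3 s * deriv B t"
    by (rule DERIV_imp_deriv) (auto intro!: derivative_eq_intros A_deriv B_deriv st(2))
  show ?thesis
    unfolding Let_def a_t b_t gauss_curvature_pencil_surface[OF st] ..
qed

end
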